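(* For every $\alpha\ge0$ and $\beta\le0$, $$\min\Big\{c^{\top}x+\mathbf{1}^{\top}\theta:\ x\in\mathcal{X},\ \theta\in\operatorname{proj}_\theta(\Gamma(x,\alpha,\beta))\Big\}\ \ge\ \sigma_x(\alpha)+\sigma_y(\alpha,\beta)+\nu(\alpha,\beta).$$
   Context: $G=(V,E)$ complete undirected graph, $V=\{0\}\cup V_+$ ($V_+$ customers), edge costs $c\in\mathbb{Q}^E_{\ge0}$; capacity $C>0$; scenarios $\xi\in[N]$ with demands $d^\xi\in\mathbb{Q}^{V_+}_{\ge0}$ ($d^\xi(v)\le C$) and probabilities $p_\xi\ge0$, $\sum_\xi p_\xi=1$. $f(S)=\sum_{i\in S}f(i)$; $k_\xi(S)=\lceil d^\xi(S)/C\rceil$; $\bar d=\sum_\xi p_\xi d^\xi$. $E(S)$: edges with both ends in $S$; $\delta(S)$: edges with exactly one end in $S$. $\mathcal{X}$ is one of $\mathcal{X}_{\mathrm{sub}}=\{x\in[0,2]^E: x(\delta(v))=2\ \forall v\in V_+,\ x(E(S))\le|S|-1\ \forall\emptyset\ne S\subseteq V_+\}$ or $\mathcal{X}_{\mathrm{cvrp}}=\mathcal{X}_{\mathrm{sub}}\cap\{x:x(\delta(0))=2k,\ x(E(S))\le|S|-\lceil\bar d(S)/C\rceil\ \forall\emptyset\ne S\subseteq V_+\}$. Fixed $w\in\mathbb{Q}^{V_+}_{\ge0}$, $b\in\mathbb{Z}^{V_+}_{\ge0}$; $[\mathbf 0,b]^N=\{y\in\mathbb{R}^{[N]\times V_+}:0\le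 y^\xi_v\le b_v\}$. Multipliers $\alpha=(\alpha^\xi_S)_{\xi\in[N],\emptyset\ne S\subseteq V_+}$, $\beta=(\beta^\xi_v)_{\xi\in[N],v\in V_+}$. $\nu(\alpha,\beta)=\sum_\xi\sum_S\alpha^\xi_S(k_\xi(S)-|S|)+\sum_\xi\sum_v\beta^\xi_vb_v$. $\sigma_x(\alpha)=\min_{x\in\mathcal{X}}\{c^\top x+\sum_{\xi}\sum_{S}\alpha^\xi_S\,x(E(S))\}$ and $\sigma_y(\alpha,\beta)=\min_{y\ge0}\sum_\xi\sum_v(p_\xi w_v-\beta^\xi_v-\sum_{S\ni v}\alpha^\xi_S)y^\xi_v$ (possibly $-\infty$). For $x\in\mathcal{X}$, $\Gamma(x,\alpha,\beta)$ is the set of $(\theta,y)\in\mathbb{R}^{V_+}_{\ge0}\times[\mathbf 0,b]^N$ with $\sum_\xi\sum_v(\beta^\xi_v+\sum_{S\ni v}\alpha^\xi_S)y^\xi_v\ge\sum_\xi\sum_S\alpha^\xi_Sx(E(S))+\nu(\alpha,\beta)$ and $\theta_v\ge\sum_\xi p_\xi w_vy^\xi_v$ for all $v\in V_+$; $\operatorname{proj}_\theta$ denotes projection onto the $\theta$-coordinates. *)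

theory Defs
  imports Complex_Main "HOL-Library.Extended_Real"
begin

text \<open>Vertices: depot 0 and customers V_+ = {1..n}; scenarios [N] = {1..N}.  Vectors indexed by
  edges / customers / scenarios are total functions required to vanish outside
  their index set.\<close>

definition Vp :: "nat \<Rightarrow> nat set" where "Vp n = {1..n}"
definition Vall :: "nat \<Rightarrow> nat set" where "Vall n = {0..n}"

definition edges :: "nat \<Rightarrow> nat set set" where
  "edges n = {{i, j} | i j. i \<in> Vall n \<and> j \<in> Vall n \<and> i \<noteq> j}"

definition Ein :: "nat \<Rightarrow> nat set \<Rightarrow> nat set set" where
  "Ein n S = {e \<in> edges n. e \<subseteq> S}"
definition delta :: "nat \<Rightarrow> nat set \<Rightarrow> nat set set" where
  "delta n S = {e \<in> edges n. card (e \<inter> S) = 1}"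

definition xsum :: "(nat set \<Rightarrow> real) \<Rightarrow> nat set set \<Rightarrow> real" where
  "xsum x F = (\<Sum>e\<in>F. x e)"

definition subsetsP :: "nat \<Rightarrow> nat set set" where
  "subsetsP n = {S. S \<subseteq> Vp n \<and> S \<noteq> {}}"

definition kxi :: "real \<Rightarrow> (nat \<Rightarrow> nat \<Rightarrow> real) \<Rightarrow> nat \<Rightarrow> nat set \<Rightarrow> int" where
  "kxi C d \<xi> S = \<lceil>(\<Sum>i\<in>S. d \<xi> i) / C\<rceil>"

definition dbar :: "nat \<Rightarrow> (nat \<Rightarrow> real) \<Rightarrow> (nat \<Rightarrow> nat \<Rightarrow> real) \<Rightarrow> nat \<Rightarrow> real" where
  "dbar N p d v = (\<Sum>\<xi>=1..N. p \<xi> * d \<xi> v)"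

definition Xsub :: "nat \<Rightarrow> (nat set \<Rightarrow> real) set" where
  "Xsub n = {x. (\<forall>e. e \<notin> edges n \<longrightarrow> x e = 0)
     \<and> (\<forall>e\<in>edges n. 0 \<le> x e \<and> x e \<le> 2)
     \<and> (\<forall>v\<in>Vp n. xsum x (delta n {v}) = 2)
     \<and> (\<forall>S\<in>subsetsP n. xsum x (Ein n S) \<le> real (card S) - 1)}"

definition Xcvrp :: "nat \<Rightarrow> nat \<Rightarrow> nat \<Rightarrow> real \<Rightarrow> (nat \<Rightarrow> real) \<Rightarrow> (nat \<Rightarrow> nat \<Rightarrow> real)
    \<Rightarrow> (nat set \<Rightarrow> real) set" where
  "Xcvrp n N k C p d = Xsub n \<inter> {x. xsum x (delta n {0}) = 2 * real k
     \<and> (\<forall>S\<in>subsetsP n.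
          xsum x (Ein n S) \<le> real (card S) - of_int \<lceil>(\<Sum>i\<in>S. dbar N p d i) / C\<rceil>)}"

definition nu :: "nat \<Rightarrow> nat \<Rightarrow> real \<Rightarrow> (nat \<Rightarrow> nat \<Rightarrow> real) \<Rightarrow> (nat \<Rightarrow> nat)
    \<Rightarrow> (nat \<Rightarrow> nat set \<Rightarrow> real) \<Rightarrow> (nat \<Rightarrow> nat \<Rightarrow> real) \<Rightarrow> real" where
  "nu n N C d b \<alpha> \<beta> =
     (\<Sum>\<xi>=1..N. \<Sum>S\<in>subsetsP n. \<alpha> \<xi> S * (of_int (kxi C d \<xi> S) - real (card S)))
   + (\<Sum>\<xi>=1..N. \<Sum>v\<in>Vp n. \<beta> \<xi> v * real (b v))"

definition sigma_x :: "nat \<Rightarrow> nat \<Rightarrow> (nat set \<Rightarrow> real) set \<Rightarrow> (nat set \<Rightarrow> real)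
    \<Rightarrow> (nat \<Rightarrow> nat set \<Rightarrow> real) \<Rightarrow> ereal" where
  "sigma_x n N X c \<alpha> = (INF x\<in>X. ereal (xsum (\<lambda>e. c e * x e) (edges n)
       + (\<Sum>\<xi>=1..N. \<Sum>S\<in>subsetsP n. \<alpha> \<xi> S * xsum x (Ein n S))))"

definition sigma_y :: "nat \<Rightarrow> nat \<Rightarrow> (nat \<Rightarrow> real) \<Rightarrow> (nat \<Rightarrow> real)
    \<Rightarrow> (nat \<Rightarrow> nat set \<Rightarrow> real) \<Rightarrow> (nat \<Rightarrow> nat \<Rightarrow> real) \<Rightarrow> ereal" where
  "sigma_y n N p w \<alpha> \<beta> =
     (INF y\<in>{y. (\<forall>\<xi> v. (\<xi> \<in> {1..N} \<and> v \<in> Vp n \<longrightarrow> 0 \<le> y \<xi> v)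
                      \<and> (\<not> (\<xi> \<in> {1..N} \<and> v \<in> Vp n) \<longrightarrow> y \<xi> v = 0))}.
        ereal (\<Sum>\<xi>=1..N. \<Sum>v\<in>Vp n.
          (p \<xi> * w v - \<beta> \<xi> v - (\<Sum>S\<in>{S\<in>subsetsP n. v \<in> S}. \<alpha> \<xi> S)) * y \<xi> v))"

definition Gamma :: "nat \<Rightarrow> nat \<Rightarrow> real \<Rightarrow> (nat \<Rightarrow> nat \<Rightarrow> real) \<Rightarrow> (nat \<Rightarrow> real)
    \<Rightarrow> (nat \<Rightarrow> real) \<Rightarrow> (nat \<Rightarrow> nat)
    \<Rightarrow> (nat set \<Rightarrow> real) \<Rightarrow> (nat \<Rightarrow> nat set \<Rightarrow> real) \<Rightarrow> (nat \<Rightarrow> nat \<Rightarrow> real)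
    \<Rightarrow> ((nat \<Rightarrow> real) \<times> (nat \<Rightarrow> nat \<Rightarrow> real)) set" where
  "Gamma n N C d p w b x \<alpha> \<beta> = {(\<theta>, y).
       (\<forall>v. (v \<in> Vp n \<longrightarrow> 0 \<le> \<theta> v) \<and> (v \<notin> Vp n \<longrightarrow> \<theta> v = 0))
     \<and> (\<forall>\<xi> v. (\<xi> \<in> {1..N} \<and> v \<in> Vp n \<longrightarrow> 0 \<le> y \<xi> v \<and> y \<xi> v \<le> real (b v))
              \<and> (\<not> (\<xi> \<in> {1..N} \<and> v \<in> Vp n) \<longrightarrow> y \<xi> v = 0))
     \<and> (\<Sum>\<xi>=1..N. \<Sum>v\<in>Vp n. (\<beta> \<xi> v + (\<Sum>S\<in>{S\<in>subsetsP n. v \<in> S}. \<alpha> \<xi> S)) * y \<xi> v)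
         \<ge> (\<Sum>\<xi>=1..N. \<Sum>S\<in>subsetsP n. \<alpha> \<xi> S * xsum x (Ein n S)) + nu n N C d b \<alpha> \<beta>
     \<and> (\<forall>v\<in>Vp n. \<theta> v \<ge> (\<Sum>\<xi>=1..N. p \<xi> * w v * y \<xi> v))}"

end

theory Submission
  imports Defs
begin

text \<open>Weak Lagrangian duality.  A feasible pair (x, \<theta>) comes with some y such that
  (\<theta>, y) lies in Gamma(x, \<alpha>, \<beta>).  Then x is feasible for sigma_x and y for sigma_y, and
  the two Lagrangian values add up to at most c'x + 1'\<theta> - \<nu>: the y-term equals the
  expected recourse cost of y, which is at most 1'\<theta>, minus the left-hand side of the
  linking constraint of Gamma, which is at least the \<alpha>-term of sigma_x plus \<nu>.\<close>

lemma sigma_x_le: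
  assumes "x \<in> X"
  shows "sigma_x n N X c \<alpha> \<le> ereal (xsum (\<lambda>e. c e * x e) (edges n)
           + (\<Sum>\<xi>=1..N. \<Sum>S\<in>subsetsP n. \<alpha> \<xi> S * xsum x (Ein n S)))"
  unfolding sigma_x_def using assms by (rule INF_lower2) simp

lemma sigma_y_le:
  assumes "\<forall>\<xi> v. (\<xi> \<in> {1..N} \<and> v \<in> Vp n \<longrightarrow> 0 \<le> y \<xi> v)
                \<and> (\<not> (\<xi> \<in> {1..N} \<and> v \<in> Vp n) \<longrightarrow> y \<xi> v = 0)"
  shows "sigma_y n N p w \<alpha> \<beta> \<le> ereal (\<Sum>\<xi>=1..N. \<Sum>v\<in>Vp n.
           (p \<xi> * w v - \<beta> \<xi> v - (\<Sum>S\<in>{S\<in>subsetsP n. v \<in> S}. \<alpha> \<xi> S)) * y \<xi> v)"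
  unfolding sigma_y_def using assms by (intro INF_lower2[where i = y]) auto

lemma Gamma_recourse_feasible:
  assumes "(\<theta>, y) \<in> Gamma n N C d p w b x \<alpha> \<beta>"
  shows "\<forall>\<xi> v. (\<xi> \<in> {1..N} \<and> v \<in> Vp n \<longrightarrow> 0 \<le> y \<xi> v)
                \<and> (\<not> (\<xi> \<in> {1..N} \<and> v \<in> Vp n) \<longrightarrow> y \<xi> v = 0)"
  using assms unfolding Gamma_def by auto

lemma Gamma_lagrangian_le:
  assumes "(\<theta>, y) \<in> Gamma n N C d p w b x \<alpha> \<beta>"
  shows "(\<Sum>\<xi>=1..N. \<Sum>S\<in>subsetsP n. \<alpha> \<xi> S * xsum x (Ein n S))
         + (\<Sum>\<xi>=1..N. \<Sum>v\<in>Vp n.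
             (p \<xi> * w v - \<beta> \<xi> v - (\<Sum>S\<in>{S\<in>subsetsP n. v \<in> S}. \<alpha> \<xi> S)) * y \<xi> v)
         + nu n N C d b \<alpha> \<beta>
       \<le> (\<Sum>v\<in>Vp n. \<theta> v)"
proof -
  define recourse where "recourse = (\<Sum>\<xi>=1..N. \<Sum>v\<in>Vp n. p \<xi> * w v * y \<xi> v)"
  define linking where "linking = (\<Sum>\<xi>=1..N. \<Sum>v\<in>Vp n.
      (\<beta> \<xi> v + (\<Sum>S\<in>{S\<in>subsetsP n. v \<in> S}. \<alpha> \<xi> S)) * y \<xi> v)"
  have linking_ge: "(\<Sum>\<xi>=1..N. \<Sum>S\<in>subsetsP n. \<alpha> \<xi> S * xsum x (Ein n S)) + nu n N C d b \<alpha> \<beta>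
      \<le> linking"
    and \<theta>_ge: "\<forall>v\<in>Vp n. (\<Sum>\<xi>=1..N. p \<xi> * w v * y \<xi> v) \<le> \<theta> v"
    using assms unfolding Gamma_def linking_def by auto
  have "(\<Sum>\<xi>=1..N. \<Sum>v\<in>Vp n.
          (p \<xi> * w v - \<beta> \<xi> v - (\<Sum>S\<in>{S\<in>subsetsP n. v \<in> S}. \<alpha> \<xi> S)) * y \<xi> v)
        = recourse - linking"
    unfolding recourse_def linking_def by (simp add: sum_subtractf[symmetric] algebra_simps)
  moreover have "recourse = (\<Sum>v\<in>Vp n. \<Sum>\<xi>=1..N. p \<xi> * w v * y \<xi> v)"
    unfolding recourse_def by (rule sum.swap)
  then have "recourse \<le> (\<Sum>v\<in>Vp n. \<theta> v)"
    using \<theta>_ge by (simp add: sum_mono)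
  ultimately show ?thesis
    using linking_ge by linarith
qed

lemma lagrangian_bound_le_objective:
  assumes x: "x \<in> X" and \<Gamma>: "(\<theta>, y) \<in> Gamma n N C d p w b x \<alpha> \<beta>"
  shows "sigma_x n N X c \<alpha> + sigma_y n N p w \<alpha> \<beta> + ereal (nu n N C d b \<alpha> \<beta>)
      \<le> ereal (xsum (\<lambda>e. c e * x e) (edges n) + (\<Sum>v\<in>Vp n. \<theta> v))"
proof -
  have "sigma_x n N X c \<alpha> + sigma_y n N p w \<alpha> \<beta> + ereal (nu n N C d b \<alpha> \<beta>)
      \<le> ereal (xsum (\<lambda>e. c e * x e) (edges n)
                 + (\<Sum>\<xi>=1..N. \<Sum>S\<in>subsetsP n. \<alpha> \<xi> S * xsum x (Ein n S)))
        + ereal (\<Sum>\<xi>=1..N. \<Sum>v\<in>Vp n.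
                 (p \<xi> * w v - \<beta> \<xi> v - (\<Sum>S\<in>{S\<in>subsetsP n. v \<in> S}. \<alpha> \<xi> S)) * y \<xi> v)
        + ereal (nu n N C d b \<alpha> \<beta>)"
    using sigma_x_le[OF x] sigma_y_le[OF Gamma_recourse_feasible[OF \<Gamma>]] by (intro add_mono) auto
  also have "\<dots> \<le> ereal (xsum (\<lambda>e. c e * x e) (edges n) + (\<Sum>v\<in>Vp n. \<theta> v))"
    using Gamma_lagrangian_le[OF \<Gamma>] by simp
  finally show ?thesis .
qed

theorem theorem6:
  fixes n N k :: nat and C :: real
    and c :: "nat set \<Rightarrow> real" and d :: "nat \<Rightarrow> nat \<Rightarrow> real" and p :: "nat \<Rightarrow> real"
    and w :: "nat \<Rightarrow> real" and b :: "nat \<Rightarrow> nat"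
    and X :: "(nat set \<Rightarrow> real) set"
    and \<alpha> :: "nat \<Rightarrow> nat set \<Rightarrow> real" and \<beta> :: "nat \<Rightarrow> nat \<Rightarrow> real"
  assumes c_ok: "\<forall>e\<in>edges n. c e \<in> \<rat> \<and> 0 \<le> c e"
    and C_pos: "C > 0"
    and d_ok: "\<forall>\<xi>\<in>{1..N}. \<forall>v\<in>Vp n. d \<xi> v \<in> \<rat> \<and> 0 \<le> d \<xi> v \<and> d \<xi> v \<le> C"
    and p_ok: "\<forall>\<xi>\<in>{1..N}. 0 \<le> p \<xi>" and p_sum: "(\<Sum>\<xi>=1..N. p \<xi>) = 1"
    and w_ok: "\<forall>v\<in>Vp n. w v \<in> \<rat> \<and> 0 \<le> w v"
    and X_def: "X = Xsub n \<or> X = Xcvrp n N k C p d"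
    and \<alpha>_nonneg: "\<forall>\<xi>\<in>{1..N}. \<forall>S\<in>subsetsP n. 0 \<le> \<alpha> \<xi> S"
    and \<beta>_nonpos: "\<forall>\<xi>\<in>{1..N}. \<forall>v\<in>Vp n. \<beta> \<xi> v \<le> 0"
  shows "(INF (x, \<theta>)\<in>{(x, \<theta>). x \<in> X \<and> \<theta> \<in> fst ` Gamma n N C d p w b x \<alpha> \<beta>}.
            ereal (xsum (\<lambda>e. c e * x e) (edges n) + (\<Sum>v\<in>Vp n. \<theta> v)))
         \<ge> sigma_x n N X c \<alpha> + sigma_y n N p w \<alpha> \<beta> + ereal (nu n N C d b \<alpha> \<beta>)"
  by (rule INF_greatest) (auto intro: lagrangian_bound_le_objective)

end
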